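(* Let $p,q$ be positive integers and $A\in\mathbb{R}^{(p+q)\times(p+q)}$. Let $J=\begin{bmatrix}E&0\\0&-I\end{bmatrix}$, where $E$ is the $p\times p$ matrix with all entries $1$ and $I$ is the $q\times q$ identity. If there exists $\lambda\ge0$ such that $A^\top JA-\lambda J$ is positive semidefinite, and the transposes of the first $p$ rows of $A$ belong to $L(p,q)$, then $A$ is a positive operator of $M(p,q)$, i.e. $A\,M(p,q)\subseteq M(p,q)$.
   Context: Let $e=(1,\dots,1)\in\mathbb{R}^p$. Identify $\mathbb{R}^p\times\mathbb{R}^q$ with $\mathbb{R}^{p+q}$ (column vectors) with the standard inner product $\langle\cdot,\cdot\rangle$ and Euclidean norm $\|\cdot\|$. Define \[L(p,q)=\{(x,u)\in\mathbb{R}^p\times\mathbb{R}^q:\ x\ge\|u\|e\}\] (componentwise inequality) and \[M(p,q)=\{(x,u)\in\mathbb{R}^p\times\mathbb{R}^q:\ \langle x,e\rangle\ge\|u\|,\ x\ge 0\}.\] A matrix $A$ is a positive operator of a cone $C$ if $AC\subseteq C$. *)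

theory Defs
  imports "HOL-Analysis.Analysis"
begin

text \<open>Vectors of R^(p+q) are indexed by the sum type 'p + 'q: index Inl i is the
 i-th x-coordinate, Inr j the j-th u-coordinate. p = CARD('p), q = CARD('q).\<close>

definition xpart :: "real ^ ('p::finite + 'q::finite) \<Rightarrow> real ^ 'p" where
  "xpart z = (\<chi> i. z $ Inl i)"

definition upart :: "real ^ ('p::finite + 'q::finite) \<Rightarrow> real ^ 'q" where
  "upart z = (\<chi> j. z $ Inr j)"

definition L_cone :: "(real ^ ('p::finite + 'q::finite)) set" where
  "L_cone = {z. \<forall>i. xpart z $ i \<ge> norm (upart z)}"

definition M_cone :: "(real ^ ('p::finite + 'q::finite)) set" where
  "M_cone = {z. (\<Sum>i\<in>UNIV. xpart z $ i) \<ge> norm (upart z) \<and> (\<forall>i. xpart z $ i \<ge> 0)}"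

definition Jmat :: "real ^ ('p::finite + 'q::finite) ^ ('p + 'q)" where
  "Jmat = (\<chi> a b. case (a, b) of
              (Inl _, Inl _) \<Rightarrow> 1
            | (Inr i, Inr j) \<Rightarrow> (if i = j then -1 else 0)
            | _ \<Rightarrow> 0)"

definition psd :: "real ^ 'n ^ 'n \<Rightarrow> bool" where
  "psd B \<longleftrightarrow> (\<forall>x. x \<bullet> (B *v x) \<ge> 0)"

definition positive_operator :: "real ^ 'n ^ 'n \<Rightarrow> (real ^ 'n) set \<Rightarrow> bool" where
  "positive_operator A C \<longleftrightarrow> (\<forall>z\<in>C. A *v z \<in> C)"

end

theory Submission
  imports Defs
begin

text \<open>In terms of the quadratic form of \<open>J\<close>, \<open>z\<^sup>T J z = \<langle>x,e\<rangle>\<^sup>2 - \<parallel>u\<parallel>\<^sup>2\<close>, the cone \<open>M(p,q)\<close> is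
  the set of vectors with \<open>x \<ge> 0\<close> and \<open>z\<^sup>T J z \<ge> 0\<close>. The semidefiniteness hypothesis gives
  \<open>(Az)\<^sup>T J (Az) \<ge> \<lambda> z\<^sup>T J z \<ge> 0\<close> for \<open>z \<in> M(p,q)\<close>, while the \<open>x\<close>-part of \<open>Az\<close> consists of
  the inner products of the first \<open>p\<close> rows of \<open>A\<close> with \<open>z\<close>; these are nonnegative because
  \<open>L(p,q)\<close> lies in the dual cone of \<open>M(p,q)\<close> (Cauchy-Schwarz).\<close>

lemma sum_UNIV_Plus:
  "(\<Sum>a\<in>(UNIV::('p::finite + 'q::finite) set). f a) = (\<Sum>i\<in>UNIV. f (Inl i)) + (\<Sum>j\<in>UNIV. f (Inr j))"
  by (simp add: UNIV_Plus_UNIV[symmetric] sum.Plus del: UNIV_Plus_UNIV)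

lemma inner_xpart_upart:
  fixes a z :: "real ^ ('p::finite + 'q::finite)"
  shows "a \<bullet> z = xpart a \<bullet> xpart z + upart a \<bullet> upart z"
  by (simp add: inner_vec_def sum_UNIV_Plus xpart_def upart_def)

lemma norm_upart_squared: "(norm (upart z))\<^sup>2 = (\<Sum>j\<in>UNIV. (z $ Inr j)\<^sup>2)"
  by (simp add: norm_vec_def L2_set_def upart_def sum_nonneg)

lemma Jmat_quadratic_form:
  fixes z :: "real ^ ('p::finite + 'q::finite)"
  shows "z \<bullet> (Jmat *v z) = (\<Sum>i\<in>UNIV. xpart z $ i)\<^sup>2 - (norm (upart z))\<^sup>2"
proof -
  have minus_identity: "(\<Sum>k\<in>UNIV. (if j = k then -1 else 0) * z $ Inr k) = - z $ Inr j" for j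
    by (simp add: if_distrib[of "\<lambda>c. c * _"] cong: if_cong)
  have "z \<bullet> (Jmat *v z) = (\<Sum>a\<in>UNIV. z $ a * (\<Sum>b\<in>UNIV. Jmat $ a $ b * z $ b))"
    by (simp add: inner_vec_def matrix_vector_mult_def)
  also have "\<dots> = (\<Sum>i\<in>UNIV. z $ Inl i * (\<Sum>k\<in>UNIV. z $ Inl k)) - (\<Sum>j\<in>UNIV. (z $ Inr j)\<^sup>2)"
    by (simp add: sum_UNIV_Plus Jmat_def power2_eq_square minus_identity sum_negf)
  also have "\<dots> = (\<Sum>i\<in>UNIV. xpart z $ i)\<^sup>2 - (norm (upart z))\<^sup>2"
    by (simp add: norm_upart_squared xpart_def power2_eq_square[of "sum _ _"] sum_distrib_right)
  finally show ?thesis .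
qed

lemma M_cone_iff_Jmat_nonneg:
  "z \<in> M_cone \<longleftrightarrow> (\<forall>i. xpart z $ i \<ge> 0) \<and> z \<bullet> (Jmat *v z) \<ge> 0"
proof -
  have "(\<Sum>i\<in>UNIV. xpart z $ i) \<ge> norm (upart z) \<longleftrightarrow> (norm (upart z))\<^sup>2 \<le> (\<Sum>i\<in>UNIV. xpart z $ i)\<^sup>2"
    if "\<forall>i. xpart z $ i \<ge> 0"
    using that by (simp add: sum_nonneg abs_le_square_iff[symmetric])
  then show ?thesis
    by (auto simp: M_cone_def Jmat_quadratic_form)
qed

lemma L_cone_inner_M_cone_nonneg:
  fixes a z :: "real ^ ('p::finite + 'q::finite)"
  assumes a: "a \<in> L_cone" and z: "z \<in> M_cone"
  shows "a \<bullet> z \<ge> 0"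
proof -
  let ?n = "norm (upart a)"
  have "?n * norm (upart z) \<le> ?n * (\<Sum>k\<in>UNIV. xpart z $ k)"
    using z by (intro mult_left_mono) (auto simp: M_cone_def)
  also have "\<dots> \<le> (\<Sum>k\<in>UNIV. xpart a $ k * xpart z $ k)"
    unfolding sum_distrib_left
    using a z by (intro sum_mono mult_right_mono) (auto simp: L_cone_def M_cone_def)
  also have "\<dots> = xpart a \<bullet> xpart z"
    by (simp add: inner_vec_def)
  finally have "?n * norm (upart z) \<le> xpart a \<bullet> xpart z" .
  moreover have "- (?n * norm (upart z)) \<le> upart a \<bullet> upart z"
    using Cauchy_Schwarz_ineq2[of "upart a" "upart z"] by linarith
  ultimately show ?thesis
    by (simp add: inner_xpart_upart)
qed

lemma quadratic_form_congruence:
  fixes A B :: "real ^ 'n ^ 'n"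
  shows "z \<bullet> ((transpose A ** B ** A) *v z) = (A *v z) \<bullet> (B *v (A *v z))"
  by (metis dot_lmul_matrix matrix_vector_mul_assoc transpose_transpose vector_transpose_matrix)

lemma psd_congruence_preserves_nonneg:
  fixes A B :: "real ^ 'n ^ 'n"
  assumes "psd (transpose A ** B ** A - lam *\<^sub>R B)" and "lam \<ge> 0"
    and "z \<bullet> (B *v z) \<ge> 0"
  shows "(A *v z) \<bullet> (B *v (A *v z)) \<ge> 0"
proof -
  have "0 \<le> z \<bullet> ((transpose A ** B ** A - lam *\<^sub>R B) *v z)"
    using assms(1) by (simp add: psd_def)
  also have "\<dots> = (A *v z) \<bullet> (B *v (A *v z)) - lam * (z \<bullet> (B *v z))"
    by (simp add: matrix_vector_mult_diff_rdistrib inner_diff_right quadratic_form_congruence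
        scaleR_matrix_vector_assoc[symmetric])
  finally show ?thesis
    using assms(2,3) by (smt (verit) mult_nonneg_nonneg)
qed

lemma xpart_matrix_vector_mult: "xpart (A *v z) $ i = row (Inl i) A \<bullet> z"
  by (simp add: xpart_def matrix_vector_mult_def inner_vec_def row_def)

theorem mainTheorem3:
  fixes A :: "real ^ ('p::finite + 'q::finite) ^ ('p + 'q)"
  assumes "\<exists>lam::real. lam \<ge> 0 \<and> psd (transpose A ** Jmat ** A - lam *\<^sub>R Jmat)"
    and "\<forall>i::'p. row (Inl i) A \<in> L_cone"
  shows "positive_operator A M_cone"
  unfolding positive_operator_def
proof
  fix z :: "real ^ ('p + 'q)"
  assume z: "z \<in> M_cone"
  obtain lam where "lam \<ge> 0" "psd (transpose A ** Jmat ** A - lam *\<^sub>R Jmat)"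
    using assms(1) by blast
  moreover have "z \<bullet> (Jmat *v z) \<ge> 0"
    using z by (simp add: M_cone_iff_Jmat_nonneg)
  ultimately have "(A *v z) \<bullet> (Jmat *v (A *v z)) \<ge> 0"
    by (intro psd_congruence_preserves_nonneg)
  moreover have "xpart (A *v z) $ i \<ge> 0" for i
    using L_cone_inner_M_cone_nonneg[OF assms(2)[rule_format] z]
    by (simp add: xpart_matrix_vector_mult)
  ultimately show "A *v z \<in> M_cone"
    by (simp add: M_cone_iff_Jmat_nonneg)
qed

end
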